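(* Let $\{\rho_\theta\}_{\theta\in\Theta}$ be a differentiable family of density operators on a $d$-dimensional Hilbert space. For $\varepsilon\in(0,1)$ set $\rho_\theta^\varepsilon:=(1-\varepsilon)\rho_\theta+\varepsilon\, I/d$. Then $$\widehat I_F(\theta;\{\rho_\theta\}_\theta)=\lim_{\varepsilon\to 0}\widehat I_F(\theta;\{\rho^\varepsilon_\theta\}_\theta),$$ including the case where the left-hand side equals $+\infty$.
   Context: All Hilbert spaces are finite-dimensional; $\Theta\subseteq\mathbb{R}$ and $\partial_\theta$ denotes the derivative with respect to $\theta$. For a differentiable family $\{\rho_\theta\}_\theta$ of density operators, the RLD Fisher information is $\widehat I_F(\theta;\{\rho_\theta\}_\theta)=\operatorname{Tr}[(\partial_\theta\rho_\theta)^2\rho_\theta^{-1}]$ if $\operatorname{supp}(\partial_\theta\rho_\theta)\subseteq\operatorname{supp}(\rho_\theta)$, and $+\infty$ otherwise, where $\rho_\theta^{-1}$ is the inverse on the support of $\rho_\theta$. *)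

theory Defs
  imports "HOL-Analysis.Derivative" "Jordan_Normal_Form.Matrix"
begin

definition hermitian_mat :: "nat \<Rightarrow> complex mat \<Rightarrow> bool" where
  "hermitian_mat d A \<longleftrightarrow> A \<in> carrier_mat d d \<and>
     (\<forall>i<d. \<forall>j<d. A $$ (i,j) = cnj (A $$ (j,i)))"

definition psd_mat :: "nat \<Rightarrow> complex mat \<Rightarrow> bool" where
  "psd_mat d A \<longleftrightarrow> hermitian_mat d A \<and>
     (\<forall>v \<in> carrier_vec d. Im ((A *\<^sub>v v) \<bullet>c v) = 0 \<and> 0 \<le> Re ((A *\<^sub>v v) \<bullet>c v))"

definition mtrace :: "complex mat \<Rightarrow> complex" where
  "mtrace A = (\<Sum>i<dim_row A. A $$ (i,i))"

definition density_op :: "nat \<Rightarrow> complex mat \<Rightarrow> bool" where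
  "density_op d A \<longleftrightarrow> psd_mat d A \<and> mtrace A = 1"

definition supp_op :: "nat \<Rightarrow> complex mat \<Rightarrow> complex vec set" where
  "supp_op d A = {A *\<^sub>v v | v. v \<in> carrier_vec d}"

definition inv_supp :: "nat \<Rightarrow> complex mat \<Rightarrow> complex mat" where
  "inv_supp d A = (THE X. X \<in> carrier_mat d d \<and>
      (\<forall>w \<in> supp_op d A. X *\<^sub>v w \<in> supp_op d A \<and> A *\<^sub>v (X *\<^sub>v w) = w) \<and>
      (\<forall>w \<in> carrier_vec d. (\<forall>u \<in> supp_op d A. u \<bullet>c w = 0) \<longrightarrow> X *\<^sub>v w = 0\<^sub>v d))"

definition mat_differentiable :: "nat \<Rightarrow> (real \<Rightarrow> complex mat) \<Rightarrow> real \<Rightarrow> bool" where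
  "mat_differentiable d \<rho> \<theta> \<longleftrightarrow>
     (\<forall>i<d. \<forall>j<d. (\<lambda>t. \<rho> t $$ (i,j)) differentiable (at \<theta>))"

definition mat_deriv :: "nat \<Rightarrow> (real \<Rightarrow> complex mat) \<Rightarrow> real \<Rightarrow> complex mat" where
  "mat_deriv d \<rho> \<theta> = mat d d (\<lambda>(i,j). vector_derivative (\<lambda>t. \<rho> t $$ (i,j)) (at \<theta>))"

definition RLD_fisher :: "nat \<Rightarrow> (real \<Rightarrow> complex mat) \<Rightarrow> real \<Rightarrow> ereal" where
  "RLD_fisher d \<rho> \<theta> =
     (let D = mat_deriv d \<rho> \<theta> in
      if supp_op d D \<subseteq> supp_op d (\<rho> \<theta>)
      then ereal (Re (mtrace (D * D * inv_supp d (\<rho> \<theta>))))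
      else \<infinity>)"

definition depolarize :: "nat \<Rightarrow> real \<Rightarrow> (real \<Rightarrow> complex mat) \<Rightarrow> real \<Rightarrow> complex mat" where
  "depolarize d \<epsilon> \<rho> t = complex_of_real (1 - \<epsilon>) \<cdot>\<^sub>m \<rho> t + complex_of_real (\<epsilon> / real d) \<cdot>\<^sub>m 1\<^sub>m d"

end

theory Submission
  imports Defs "HOL-Real_Asymp.Real_Asymp"
begin

text \<open>
  Write \<open>\<rho> = \<rho>\<^sub>\<theta>\<close>, \<open>D = \<partial>\<^sub>\<theta>\<rho>\<^sub>\<theta>\<close> and \<open>M\<^sub>\<epsilon> = (1 - \<epsilon>) \<rho> + (\<epsilon>/d) I\<close>. The derivative of the depolarized
  family is \<open>(1 - \<epsilon>) D\<close> and \<open>M\<^sub>\<epsilon>\<close> is positive definite, so its RLD Fisher information is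
  \<open>\<Sum>\<^sub>l \<langle>w\<^sub>l, (1 - \<epsilon>) D e\<^sub>l\<rangle>\<close>, where \<open>w\<^sub>l\<close> solves \<open>(1 - \<epsilon>) \<rho> w + (\<epsilon>/d) w = (1 - \<epsilon>) D e\<^sub>l\<close>.
  If \<open>D e\<^sub>l = \<rho> u\<close> lies in the support of \<open>\<rho>\<close>, positivity of \<open>\<rho>\<close> on \<open>w - u\<close> bounds \<open>w\<close> uniformly,
  and the summand is \<open>(1 - \<epsilon>) \<langle>u, D e\<^sub>l\<rangle> + O(\<epsilon>)\<close>, which tends to \<open>\<langle>\<rho>\<^sup>-\<^sup>1 D e\<^sub>l, D e\<^sub>l\<rangle>\<close>.
  If \<open>D e\<^sub>l\<close> has a component \<open>k \<noteq> 0\<close> in the kernel of \<open>\<rho>\<close>, pairing the equation with \<open>k\<close> gives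
  \<open>(\<epsilon>/d) \<langle>w, k\<rangle> = (1 - \<epsilon>) |k|\<^sup>2\<close>, so \<open>w\<close> and the summand are of order \<open>1/\<epsilon>\<close>; as all summands are
  nonnegative, the sum diverges exactly when \<open>supp D \<subseteq> supp \<rho>\<close> fails. The range--kernel decomposition
  of a Hermitian matrix, which also yields the inverse on the support, is built by Gram--Schmidt.
\<close>

unbundle no vec_syntax

lemma cscalar_prod_eq_sum:
  "(x :: complex vec) \<in> carrier_vec n \<Longrightarrow> y \<in> carrier_vec n \<Longrightarrow> x \<bullet>c y = (\<Sum>i<n. x$i * cnj (y$i))"
  by (auto simp: scalar_prod_def atLeast0LessThan intro!: sum.cong)

lemma mult_mat_vec_index_sum:
  "(A :: complex mat) \<in> carrier_mat n n \<Longrightarrow> x \<in> carrier_vec n \<Longrightarrow> i < n \<Longrightarrow>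
   (A *\<^sub>v x) $ i = (\<Sum>j<n. A$$(i,j) * x$j)"
  by (auto simp: scalar_prod_def atLeast0LessThan intro!: sum.cong)

lemma mult_mat_vec_zero_vec: "(A :: 'a :: semiring_0 mat) \<in> carrier_mat m n \<Longrightarrow> A *\<^sub>v 0\<^sub>v n = 0\<^sub>v m"
  by (intro eq_vecI) auto

lemma mult_mat_vec_unit_vec: "(A :: 'a :: semiring_1 mat) \<in> carrier_mat n n \<Longrightarrow> j < n \<Longrightarrow> A *\<^sub>v unit_vec n j = col A j"
  using col_mult2[of A n n "1\<^sub>m n" n j] right_mult_one_mat[of A n n] by simp

lemma add_vec_eq_imp_diff:
  "a \<in> carrier_vec n \<Longrightarrow> b \<in> carrier_vec n \<Longrightarrow> w = a + b \<Longrightarrow> b = w - (a :: 'a :: ab_group_add vec)"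
  by (intro eq_vecI) auto

lemma diff_vec_eq_0_iff:
  "a \<in> carrier_vec n \<Longrightarrow> b \<in> carrier_vec n \<Longrightarrow> a - b = 0\<^sub>v n \<longleftrightarrow> a = (b :: 'a :: ab_group_add vec)"
  by (auto simp: vec_eq_iff)

lemma mat_eq_by_mult_mat_vec:
  assumes "A \<in> carrier_mat n n" "B \<in> carrier_mat n n"
    and "\<And>w. w \<in> carrier_vec n \<Longrightarrow> A *\<^sub>v w = B *\<^sub>v (w :: complex vec)"
  shows "A = B"
  using assms by (intro mat_col_eqI) (auto simp flip: mult_mat_vec_unit_vec)

lemma cscalar_prod_add_left:
  "x \<in> carrier_vec n \<Longrightarrow> y \<in> carrier_vec n \<Longrightarrow> (z :: complex vec) \<in> carrier_vec n \<Longrightarrow>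
   (x + y) \<bullet>c z = x \<bullet>c z + y \<bullet>c z"
  by (simp add: cscalar_prod_eq_sum[of _ n] sum.distrib[symmetric] distrib_right)

lemma cscalar_prod_add_right:
  "(x :: complex vec) \<in> carrier_vec n \<Longrightarrow> y \<in> carrier_vec n \<Longrightarrow> z \<in> carrier_vec n \<Longrightarrow>
   x \<bullet>c (y + z) = x \<bullet>c y + x \<bullet>c z"
  by (simp add: cscalar_prod_eq_sum[of _ n] sum.distrib[symmetric] distrib_left)

lemma cscalar_prod_diff_left:
  "x \<in> carrier_vec n \<Longrightarrow> y \<in> carrier_vec n \<Longrightarrow> (z :: complex vec) \<in> carrier_vec n \<Longrightarrow>
   (x - y) \<bullet>c z = x \<bullet>c z - y \<bullet>c z"
  by (simp add: cscalar_prod_eq_sum[of _ n] sum_subtractf[symmetric] left_diff_distrib)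

lemma cscalar_prod_diff_right:
  "(x :: complex vec) \<in> carrier_vec n \<Longrightarrow> y \<in> carrier_vec n \<Longrightarrow> z \<in> carrier_vec n \<Longrightarrow>
   x \<bullet>c (y - z) = x \<bullet>c y - x \<bullet>c z"
  by (simp add: cscalar_prod_eq_sum[of _ n] sum_subtractf[symmetric] right_diff_distrib)

lemma cscalar_prod_smult_left:
  "x \<in> carrier_vec n \<Longrightarrow> (y :: complex vec) \<in> carrier_vec n \<Longrightarrow> (a \<cdot>\<^sub>v x) \<bullet>c y = a * (x \<bullet>c y)"
  by (simp add: cscalar_prod_eq_sum[of _ n] sum_distrib_left mult.assoc)

lemma cscalar_prod_smult_right:
  "(x :: complex vec) \<in> carrier_vec n \<Longrightarrow> y \<in> carrier_vec n \<Longrightarrow> x \<bullet>c (a \<cdot>\<^sub>v y) = cnj a * (x \<bullet>c y)"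
  by (simp add: cscalar_prod_eq_sum[of _ n] sum_distrib_left algebra_simps)

lemma cscalar_prod_swap:
  "(x :: complex vec) \<in> carrier_vec n \<Longrightarrow> y \<in> carrier_vec n \<Longrightarrow> y \<bullet>c x = cnj (x \<bullet>c y)"
  by (simp add: cscalar_prod_eq_sum[of _ n] mult.commute)

lemma cscalar_prod_self:
  assumes "(x :: complex vec) \<in> carrier_vec n"
  shows "x \<bullet>c x = of_real (\<Sum>i<n. (cmod (x$i))\<^sup>2)"
proof -
  have "z * cnj z = of_real ((cmod z)\<^sup>2)" for z
    using complex_norm_square[of z] by simp
  then show ?thesis
    using assms by (simp add: cscalar_prod_eq_sum[of _ n] del: of_real_power)
qed

lemma cscalar_prod_self_Im: "(x :: complex vec) \<in> carrier_vec n \<Longrightarrow> Im (x \<bullet>c x) = 0"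
  by (simp add: cscalar_prod_self)

lemma cscalar_prod_self_nonneg: "(x :: complex vec) \<in> carrier_vec n \<Longrightarrow> 0 \<le> Re (x \<bullet>c x)"
  by (simp add: cscalar_prod_self sum_nonneg)

lemma cscalar_prod_self_eq_0_iff:
  "(x :: complex vec) \<in> carrier_vec n \<Longrightarrow> Re (x \<bullet>c x) = 0 \<longleftrightarrow> x = 0\<^sub>v n"
  using cscalar_prod_self_Im conjugate_square_eq_0_vec[of x n] by (simp add: complex_eq_iff)

lemma cmod_cscalar_prod_le:
  assumes x: "(x :: complex vec) \<in> carrier_vec n" and y: "y \<in> carrier_vec n"
  shows "cmod (x \<bullet>c y) \<le> sqrt (Re (x \<bullet>c x)) * (\<Sum>i<n. cmod (y$i))"
proof -
  have coord: "cmod (x$i) \<le> sqrt (Re (x \<bullet>c x))" if "i < n" for i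
    using that x by (auto simp: cscalar_prod_self intro!: real_le_rsqrt member_le_sum)
  have "cmod (x \<bullet>c y) \<le> (\<Sum>i<n. cmod (x$i) * cmod (y$i))"
    using x y norm_sum[of "\<lambda>i. x$i * cnj (y$i)" "{..<n}"]
    by (simp add: cscalar_prod_eq_sum[of _ n] norm_mult)
  also have "\<dots> \<le> (\<Sum>i<n. sqrt (Re (x \<bullet>c x)) * cmod (y$i))"
    using coord by (intro sum_mono mult_right_mono) auto
  finally show ?thesis
    by (simp add: sum_distrib_left)
qed

section \<open>Range and kernel of a Hermitian matrix\<close>

lemma hermitian_mat_carrier: "hermitian_mat n A \<Longrightarrow> A \<in> carrier_mat n n"
  unfolding hermitian_mat_def by blast

lemma hermitian_mat_cnj: "hermitian_mat n A \<Longrightarrow> i < n \<Longrightarrow> j < n \<Longrightarrow> cnj (A $$ (i,j)) = A $$ (j,i)"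
  unfolding hermitian_mat_def by metis

lemma hermitian_cscalar_prod:
  assumes h: "hermitian_mat n A" and x: "x \<in> carrier_vec n" and y: "y \<in> carrier_vec n"
  shows "(A *\<^sub>v x) \<bullet>c y = x \<bullet>c (A *\<^sub>v y)"
proof -
  have A: "A \<in> carrier_mat n n" by (rule hermitian_mat_carrier[OF h])
  have "(A *\<^sub>v x) \<bullet>c y = (\<Sum>i<n. \<Sum>j<n. A$$(i,j) * x$j * cnj (y$i))"
    using A x y by (simp add: cscalar_prod_eq_sum[of _ n] mult_mat_vec_index_sum sum_distrib_right del: index_mult_mat_vec)
  also have "\<dots> = (\<Sum>j<n. \<Sum>i<n. x$j * cnj (A$$(j,i) * y$i))"
    by (subst sum.swap) (auto simp: hermitian_mat_cnj[OF h] mult_ac intro!: sum.cong)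
  also have "\<dots> = x \<bullet>c (A *\<^sub>v y)"
    using A x y by (simp add: cscalar_prod_eq_sum[of _ n] mult_mat_vec_index_sum sum_distrib_left del: index_mult_mat_vec)
  finally show ?thesis .
qed

lemma hermitian_mult_mat_vec_eq_0_if_square:
  assumes h: "hermitian_mat n A" and t: "t \<in> carrier_vec n" and "A *\<^sub>v (A *\<^sub>v t) = 0\<^sub>v n"
  shows "A *\<^sub>v t = 0\<^sub>v n"
proof -
  have At: "A *\<^sub>v t \<in> carrier_vec n" using hermitian_mat_carrier[OF h] t by simp
  have "(A *\<^sub>v t) \<bullet>c (A *\<^sub>v t) = 0"
    using hermitian_cscalar_prod[OF h t At] assms(3) t by simp
  then show ?thesis using cscalar_prod_self_eq_0_iff[OF At] by simp
qed

definition vanishes_from :: "nat \<Rightarrow> nat \<Rightarrow> complex vec \<Rightarrow> bool" where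
  "vanishes_from n k z \<longleftrightarrow> (\<forall>i. k \<le> i \<longrightarrow> i < n \<longrightarrow> z$i = 0)"

lemma vanishes_from_Suc_split:
  assumes z: "z \<in> carrier_vec n" "vanishes_from n (Suc k) z"
    and q: "q \<in> carrier_vec n" "vanishes_from n (Suc k) q" "q$k = 1"
  shows "vanishes_from n k (z - z$k \<cdot>\<^sub>v q)"
  unfolding vanishes_from_def
proof (intro allI impI)
  fix i assume "k \<le> i" "i < n"
  then consider "i = k" | "Suc k \<le> i" by linarith
  then show "(z - z$k \<cdot>\<^sub>v q) $ i = 0"
    by cases (use z q \<open>i < n\<close> in \<open>auto simp: vanishes_from_def\<close>)
qed

lemma cscalar_prod_projection_coeff:
  assumes "r \<in> carrier_vec n" "(q :: complex vec) \<in> carrier_vec n"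
  shows "(r \<bullet>c q) / (q \<bullet>c q) * (q \<bullet>c q) = r \<bullet>c q"
proof (cases "q \<bullet>c q = 0")
  case True
  then have "q = 0\<^sub>v n" using cscalar_prod_self_eq_0_iff[OF assms(2)] by simp
  then show ?thesis using assms by simp
qed simp

lemma orthogonal_image_prefix_Suc:
  assumes A: "A \<in> carrier_mat n n"
    and r: "r \<in> carrier_vec n" "\<forall>z \<in> carrier_vec n. vanishes_from n k z \<longrightarrow> r \<bullet>c (A *\<^sub>v z) = 0"
    and p: "p \<in> carrier_vec n" "\<forall>z \<in> carrier_vec n. vanishes_from n k z \<longrightarrow> p \<bullet>c (A *\<^sub>v z) = 0"
    and q: "q \<in> carrier_vec n" "vanishes_from n (Suc k) q" "q$k = 1" and Aq: "A *\<^sub>v q = p"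
    and z: "z \<in> carrier_vec n" "vanishes_from n (Suc k) z"
  shows "(r - (r \<bullet>c p) / (p \<bullet>c p) \<cdot>\<^sub>v p) \<bullet>c (A *\<^sub>v z) = 0"
proof -
  define z' where "z' = z - z$k \<cdot>\<^sub>v q"
  have z': "z' \<in> carrier_vec n" "vanishes_from n k z'"
    using vanishes_from_Suc_split[OF z q] z q by (auto simp: z'_def)
  have "A *\<^sub>v z = A *\<^sub>v z' + z$k \<cdot>\<^sub>v p"
    using A z q p Aq by (simp add: z'_def mult_minus_distrib_mat_vec mult_mat_vec) (intro eq_vecI; auto)
  then have "(r - (r \<bullet>c p) / (p \<bullet>c p) \<cdot>\<^sub>v p) \<bullet>c (A *\<^sub>v z)
      = cnj (z$k) * (r \<bullet>c p - (r \<bullet>c p) / (p \<bullet>c p) * (p \<bullet>c p))"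
    using A r p z'
    by (simp add: cscalar_prod_diff_left[of _ n] cscalar_prod_add_right[of _ n]
        cscalar_prod_smult_left[of _ n] cscalar_prod_smult_right[of _ n] algebra_simps)
  then show ?thesis
    using cscalar_prod_projection_coeff[OF r(1) p(1)] by simp
qed

text \<open>Gram--Schmidt in disguise: \<open>v\<close> is split into its orthogonal projection onto the image under
  \<open>A\<close> of the span of the first \<open>k\<close> standard basis vectors, and a remainder orthogonal to that image.\<close>
lemma orthogonal_decomp_image_prefix:
  assumes A: "A \<in> carrier_mat n n"
  shows "k \<le> n \<Longrightarrow> v \<in> carrier_vec n \<Longrightarrow> \<exists>y r. y \<in> carrier_vec n \<and> r \<in> carrier_vec n \<and>
     vanishes_from n k y \<and> v = A *\<^sub>v y + r \<and>
     (\<forall>z \<in> carrier_vec n. vanishes_from n k z \<longrightarrow> r \<bullet>c (A *\<^sub>v z) = 0)"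
proof (induction k arbitrary: v)
  case 0
  have "v \<bullet>c (A *\<^sub>v z) = 0" if "z \<in> carrier_vec n" "vanishes_from n 0 z" for z
  proof -
    have "z = 0\<^sub>v n"
      using that unfolding vanishes_from_def by (intro eq_vecI) auto
    then show ?thesis using A 0 by (simp add: mult_mat_vec_zero_vec)
  qed
  then show ?case
    using A 0 by (rule_tac exI[of _ "0\<^sub>v n"], rule_tac exI[of _ v]) (simp add: vanishes_from_def mult_mat_vec_zero_vec)
next
  case (Suc k)
  obtain y r where y: "y \<in> carrier_vec n" "vanishes_from n k y" and r: "r \<in> carrier_vec n"
    and v: "v = A *\<^sub>v y + r" and r_orth: "\<forall>z \<in> carrier_vec n. vanishes_from n k z \<longrightarrow> r \<bullet>c (A *\<^sub>v z) = 0"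
    using Suc.IH[of v] Suc.prems by (meson Suc_leD)
  obtain y' p where y': "y' \<in> carrier_vec n" "vanishes_from n k y'" and p: "p \<in> carrier_vec n"
    and e: "A *\<^sub>v unit_vec n k = A *\<^sub>v y' + p"
    and p_orth: "\<forall>z \<in> carrier_vec n. vanishes_from n k z \<longrightarrow> p \<bullet>c (A *\<^sub>v z) = 0"
    using Suc.IH[of "A *\<^sub>v unit_vec n k"] Suc.prems A by (meson Suc_leD mult_mat_vec_carrier unit_vec_carrier)
  define q where "q = unit_vec n k - y'"
  define \<alpha> where "\<alpha> = (r \<bullet>c p) / (p \<bullet>c p)"
  have q: "q \<in> carrier_vec n" "vanishes_from n (Suc k) q" "q$k = 1"
    using y' Suc.prems by (auto simp: q_def vanishes_from_def)
  have Aq: "A *\<^sub>v q = p"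
    using A y' p e by (auto simp: q_def mult_minus_distrib_mat_vec)
  have "(r - \<alpha> \<cdot>\<^sub>v p) \<bullet>c (A *\<^sub>v z) = 0" if "z \<in> carrier_vec n" "vanishes_from n (Suc k) z" for z
    unfolding \<alpha>_def by (rule orthogonal_image_prefix_Suc[OF A r r_orth p p_orth q Aq that])
  moreover have "v = A *\<^sub>v (y + \<alpha> \<cdot>\<^sub>v q) + (r - \<alpha> \<cdot>\<^sub>v p)"
    using A y r p q Aq by (simp add: v mult_add_distrib_mat_vec mult_mat_vec) (intro eq_vecI; auto)
  moreover have "vanishes_from n (Suc k) (y + \<alpha> \<cdot>\<^sub>v q)"
    using y q by (auto simp: vanishes_from_def)
  ultimately show ?case
    using y r p q by (intro exI[of _ "y + \<alpha> \<cdot>\<^sub>v q"] exI[of _ "r - \<alpha> \<cdot>\<^sub>v p"]) auto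
qed

lemma hermitian_range_kernel_decomp:
  assumes h: "hermitian_mat n A" and v: "v \<in> carrier_vec n"
  obtains y k where "y \<in> carrier_vec n" "k \<in> carrier_vec n" "v = A *\<^sub>v y + k" "A *\<^sub>v k = 0\<^sub>v n"
proof -
  have A: "A \<in> carrier_mat n n" by (rule hermitian_mat_carrier[OF h])
  obtain y k where y: "y \<in> carrier_vec n" and k: "k \<in> carrier_vec n" and "v = A *\<^sub>v y + k"
    and k_orth: "\<forall>z \<in> carrier_vec n. vanishes_from n n z \<longrightarrow> k \<bullet>c (A *\<^sub>v z) = 0"
    using orthogonal_decomp_image_prefix[OF A _ v, of n] by blast
  moreover have "A *\<^sub>v k = 0\<^sub>v n"
  proof -
    have Ak: "A *\<^sub>v k \<in> carrier_vec n" using A k by simp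
    have "(A *\<^sub>v k) \<bullet>c (A *\<^sub>v k) = 0"
      using k_orth Ak hermitian_cscalar_prod[OF h k Ak] by (simp add: vanishes_from_def)
    then show ?thesis using cscalar_prod_self_eq_0_iff[OF Ak] by simp
  qed
  ultimately show ?thesis using that by blast
qed

lemma hermitian_square_range_kernel_decomp:
  assumes h: "hermitian_mat n A" and v: "v \<in> carrier_vec n"
  obtains z k where "z \<in> carrier_vec n" "k \<in> carrier_vec n" "v = A *\<^sub>v (A *\<^sub>v z) + k" "A *\<^sub>v k = 0\<^sub>v n"
proof -
  have A: "A \<in> carrier_mat n n" by (rule hermitian_mat_carrier[OF h])
  obtain y k where y: "y \<in> carrier_vec n" and k: "k \<in> carrier_vec n" "A *\<^sub>v k = 0\<^sub>v n"
    and v_eq: "v = A *\<^sub>v y + k"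
    using hermitian_range_kernel_decomp[OF h v] by blast
  obtain z k' where z: "z \<in> carrier_vec n" and k': "k' \<in> carrier_vec n" "A *\<^sub>v k' = 0\<^sub>v n"
    and y_eq: "y = A *\<^sub>v z + k'"
    using hermitian_range_kernel_decomp[OF h y] by blast
  have "A *\<^sub>v y = A *\<^sub>v (A *\<^sub>v z)"
    using A z k' by (simp add: y_eq mult_add_distrib_mat_vec)
  then show ?thesis using that z k v_eq by simp
qed

lemma hermitian_square_range_kernel_mat:
  assumes h: "hermitian_mat n A"
  obtains Z K where "Z \<in> carrier_mat n n" "K \<in> carrier_mat n n"
    "\<And>w. w \<in> carrier_vec n \<Longrightarrow> w = A *\<^sub>v (A *\<^sub>v (Z *\<^sub>v w)) + K *\<^sub>v w"
    "\<And>w. w \<in> carrier_vec n \<Longrightarrow> A *\<^sub>v (K *\<^sub>v w) = 0\<^sub>v n"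
proof -
  have A: "A \<in> carrier_mat n n" by (rule hermitian_mat_carrier[OF h])
  have "\<forall>j<n. \<exists>z k. z \<in> carrier_vec n \<and> k \<in> carrier_vec n \<and>
      unit_vec n j = A *\<^sub>v (A *\<^sub>v z) + k \<and> A *\<^sub>v k = 0\<^sub>v n"
    by (metis hermitian_square_range_kernel_decomp[OF h] unit_vec_carrier)
  then obtain z k where zk: "\<And>j. j < n \<Longrightarrow> z j \<in> carrier_vec n \<and> k j \<in> carrier_vec n \<and>
      unit_vec n j = A *\<^sub>v (A *\<^sub>v z j) + k j \<and> A *\<^sub>v k j = 0\<^sub>v n"
    by metis
  define Z where "Z = mat n n (\<lambda>(i,j). z j $ i)"
  define K where "K = mat n n (\<lambda>(i,j). k j $ i)"
  have Z: "Z \<in> carrier_mat n n" and K: "K \<in> carrier_mat n n" by (simp_all add: Z_def K_def)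
  have AZ: "A * Z \<in> carrier_mat n n" using A Z by simp
  have col_Z: "col Z j = z j" and col_K: "col K j = k j" if "j < n" for j
    using zk[OF that] that by (auto simp: Z_def K_def)
  have one: "A * (A * Z) + K = 1\<^sub>m n"
  proof (rule mat_col_eqI)
    fix j assume "j < dim_col (1\<^sub>m n :: complex mat)"
    then have j: "j < n" by simp
    have "col (A * (A * Z) + K) j = col (A * (A * Z)) j + col K j"
      using A Z K j by (intro col_add mult_carrier_mat)
    also have "\<dots> = A *\<^sub>v (A *\<^sub>v z j) + k j"
      using j by (simp add: col_mult2[OF A AZ j] col_mult2[OF A Z j] col_Z col_K)
    finally show "col (A * (A * Z) + K) j = col (1\<^sub>m n) j"
      using j zk[OF j] by simp
  qed (use A Z K in auto)
  have zero: "A * K = 0\<^sub>m n n"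
    using A K zk by (intro mat_col_eqI) (simp_all add: col_K)
  show ?thesis
  proof (rule that[OF Z K])
    fix w :: "complex vec" assume w: "w \<in> carrier_vec n"
    have "w = (A * (A * Z) + K) *\<^sub>v w" using w by (simp add: one)
    also have "\<dots> = A *\<^sub>v (A *\<^sub>v (Z *\<^sub>v w)) + K *\<^sub>v w"
      using A AZ K w by (simp add: add_mult_distrib_mat_vec[of _ n n] assoc_mult_mat_vec[OF A AZ w] assoc_mult_mat_vec[OF A Z w])
    finally show "w = A *\<^sub>v (A *\<^sub>v (Z *\<^sub>v w)) + K *\<^sub>v w" .
    have "A *\<^sub>v (K *\<^sub>v w) = (A * K) *\<^sub>v w" using A K w by simp
    then show "A *\<^sub>v (K *\<^sub>v w) = 0\<^sub>v n" using w by (auto simp: zero)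
  qed
qed

section \<open>The inverse on the support\<close>

lemma supp_opI: "v \<in> carrier_vec n \<Longrightarrow> A *\<^sub>v v \<in> supp_op n A"
  unfolding supp_op_def by blast

lemma supp_opE:
  assumes "u \<in> supp_op n A"
  obtains v where "v \<in> carrier_vec n" "u = A *\<^sub>v v"
  using assms unfolding supp_op_def by blast

lemma supp_op_carrier: "A \<in> carrier_mat n n \<Longrightarrow> u \<in> supp_op n A \<Longrightarrow> u \<in> carrier_vec n"
  by (auto elim: supp_opE)

lemma supp_op_diff:
  assumes "(A :: complex mat) \<in> carrier_mat n n" "u \<in> supp_op n A" "u' \<in> supp_op n A"
  shows "u - u' \<in> supp_op n A"
proof -
  obtain v v' where "v \<in> carrier_vec n" "v' \<in> carrier_vec n" "u = A *\<^sub>v v" "u' = A *\<^sub>v v'"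
    using assms(2,3) by (auto elim!: supp_opE)
  then have "u - u' = A *\<^sub>v (v - v')" using assms(1) by (simp add: mult_minus_distrib_mat_vec)
  then show ?thesis using \<open>v \<in> carrier_vec n\<close> \<open>v' \<in> carrier_vec n\<close> by (simp add: supp_opI)
qed

lemma col_in_supp_op: "(B :: complex mat) \<in> carrier_mat n n \<Longrightarrow> j < n \<Longrightarrow> col B j \<in> supp_op n B"
  by (metis mult_mat_vec_unit_vec supp_opI unit_vec_carrier)

lemma hermitian_supp_op_kernel_eq_0:
  assumes h: "hermitian_mat n A" and u: "u \<in> supp_op n A" and "A *\<^sub>v u = 0\<^sub>v n"
  shows "u = 0\<^sub>v n"
proof -
  obtain v where "v \<in> carrier_vec n" "u = A *\<^sub>v v" using u by (rule supp_opE)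
  then show ?thesis using hermitian_mult_mat_vec_eq_0_if_square[OF h] assms(3) by simp
qed

lemma hermitian_kernel_orthogonal_supp_op:
  assumes h: "hermitian_mat n A" and k: "k \<in> carrier_vec n" "A *\<^sub>v k = 0\<^sub>v n" and u: "u \<in> supp_op n A"
  shows "u \<bullet>c k = 0"
proof -
  obtain v where "v \<in> carrier_vec n" "u = A *\<^sub>v v" using u by (rule supp_opE)
  then show ?thesis using hermitian_cscalar_prod[OF h _ k(1)] k by simp
qed

definition inv_on_supp :: "nat \<Rightarrow> complex mat \<Rightarrow> complex mat \<Rightarrow> bool" where
  "inv_on_supp n A X \<longleftrightarrow> X \<in> carrier_mat n n \<and>
      (\<forall>w \<in> supp_op n A. X *\<^sub>v w \<in> supp_op n A \<and> A *\<^sub>v (X *\<^sub>v w) = w) \<and>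
      (\<forall>w \<in> carrier_vec n. (\<forall>u \<in> supp_op n A. u \<bullet>c w = 0) \<longrightarrow> X *\<^sub>v w = 0\<^sub>v n)"

lemma inv_supp_eq_The: "inv_supp n A = (THE X. inv_on_supp n A X)"
  unfolding inv_supp_def inv_on_supp_def ..

lemma hermitian_inv_on_supp_exists:
  assumes h: "hermitian_mat n A"
  shows "\<exists>X. inv_on_supp n A X"
proof -
  have A: "A \<in> carrier_mat n n" by (rule hermitian_mat_carrier[OF h])
  obtain Z K where Z: "Z \<in> carrier_mat n n" and K: "K \<in> carrier_mat n n"
    and decomp: "\<And>w. w \<in> carrier_vec n \<Longrightarrow> w = A *\<^sub>v (A *\<^sub>v (Z *\<^sub>v w)) + K *\<^sub>v w"
    and AK: "\<And>w. w \<in> carrier_vec n \<Longrightarrow> A *\<^sub>v (K *\<^sub>v w) = 0\<^sub>v n"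
    using hermitian_square_range_kernel_mat[OF h] by blast
  define r where "r w = A *\<^sub>v (A *\<^sub>v (Z *\<^sub>v w))" for w
  have r: "r w \<in> carrier_vec n" "r w \<in> supp_op n A" if "w \<in> carrier_vec n" for w
    using A Z that by (auto simp: r_def intro!: supp_opI)
  have K_eq: "K *\<^sub>v w = w - r w" if w: "w \<in> carrier_vec n" for w
    using add_vec_eq_imp_diff[OF r(1)[OF w] _ decomp[OF w, folded r_def]] K w by simp
  have "inv_on_supp n A (A * Z)"
    unfolding inv_on_supp_def
  proof (intro conjI ballI impI)
    show "A * Z \<in> carrier_mat n n" using A Z by simp
  next
    fix w assume w_supp: "w \<in> supp_op n A"
    have w: "w \<in> carrier_vec n" using supp_op_carrier[OF A w_supp] .
    show "(A * Z) *\<^sub>v w \<in> supp_op n A" using A Z w by (simp add: supp_opI)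
    have "K *\<^sub>v w = 0\<^sub>v n"
      using hermitian_supp_op_kernel_eq_0[OF h _ AK[OF w]] supp_op_diff[OF A w_supp r(2)[OF w]]
      by (simp add: K_eq[OF w])
    then show "A *\<^sub>v ((A * Z) *\<^sub>v w) = w"
      using decomp[OF w] A Z w r[OF w] by (simp add: r_def)
  next
    fix w assume w: "w \<in> carrier_vec n" and orth: "\<forall>u \<in> supp_op n A. u \<bullet>c w = 0"
    have Kw: "K *\<^sub>v w \<in> carrier_vec n" using K w by simp
    have "r w \<bullet>c r w = r w \<bullet>c w - r w \<bullet>c (K *\<^sub>v w)"
      using r[OF w] w Kw by (simp add: K_eq[OF w] cscalar_prod_diff_right[of _ n])
    also have "\<dots> = 0"
      using orth r[OF w] hermitian_kernel_orthogonal_supp_op[OF h Kw AK[OF w]] by simp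
    finally have "A *\<^sub>v (A *\<^sub>v (Z *\<^sub>v w)) = 0\<^sub>v n"
      using cscalar_prod_self_eq_0_iff[OF r(1)[OF w]] by (simp add: r_def)
    then show "(A * Z) *\<^sub>v w = 0\<^sub>v n"
      using hermitian_mult_mat_vec_eq_0_if_square[OF h] A Z w by simp
  qed
  then show ?thesis ..
qed

lemma hermitian_inv_on_supp_unique:
  assumes h: "hermitian_mat n A" and X: "inv_on_supp n A X" and Y: "inv_on_supp n A Y"
  shows "X = Y"
proof -
  have A: "A \<in> carrier_mat n n" by (rule hermitian_mat_carrier[OF h])
  obtain Z K where Z: "Z \<in> carrier_mat n n" and K: "K \<in> carrier_mat n n"
    and decomp: "\<And>w. w \<in> carrier_vec n \<Longrightarrow> w = A *\<^sub>v (A *\<^sub>v (Z *\<^sub>v w)) + K *\<^sub>v w"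
    and AK: "\<And>w. w \<in> carrier_vec n \<Longrightarrow> A *\<^sub>v (K *\<^sub>v w) = 0\<^sub>v n"
    using hermitian_square_range_kernel_mat[OF h] by blast
  have XY_carrier: "X \<in> carrier_mat n n" "Y \<in> carrier_mat n n"
    using X Y by (simp_all add: inv_on_supp_def)
  show ?thesis
  proof (rule mat_eq_by_mult_mat_vec[OF XY_carrier])
    fix w :: "complex vec" assume w: "w \<in> carrier_vec n"
    define r where "r = A *\<^sub>v (A *\<^sub>v (Z *\<^sub>v w))"
    have r: "r \<in> carrier_vec n" "r \<in> supp_op n A" using A Z w by (auto simp: r_def intro!: supp_opI)
    have Kw: "K *\<^sub>v w \<in> carrier_vec n" using K w by simp
    have "X *\<^sub>v (K *\<^sub>v w) = 0\<^sub>v n" "Y *\<^sub>v (K *\<^sub>v w) = 0\<^sub>v n"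
      using X Y Kw hermitian_kernel_orthogonal_supp_op[OF h Kw AK[OF w]]
      by (auto simp: inv_on_supp_def)
    moreover have "X *\<^sub>v r = Y *\<^sub>v r"
    proof -
      have "X *\<^sub>v r - Y *\<^sub>v r \<in> supp_op n A" "A *\<^sub>v (X *\<^sub>v r) = r" "A *\<^sub>v (Y *\<^sub>v r) = r"
        using X Y r A by (auto simp: inv_on_supp_def intro!: supp_op_diff)
      then have "X *\<^sub>v r - Y *\<^sub>v r = 0\<^sub>v n"
        using hermitian_supp_op_kernel_eq_0[OF h] A XY_carrier r by (simp add: mult_minus_distrib_mat_vec)
      then show ?thesis using XY_carrier r by (simp add: diff_vec_eq_0_iff)
    qed
    ultimately show "X *\<^sub>v w = Y *\<^sub>v w"
      using decomp[OF w] XY_carrier r Kw by (metis mult_add_distrib_mat_vec r_def)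
  qed
qed

lemma hermitian_inv_on_supp_inv_supp: "hermitian_mat n A \<Longrightarrow> inv_on_supp n A (inv_supp n A)"
  unfolding inv_supp_eq_The
  by (rule theI') (use hermitian_inv_on_supp_exists hermitian_inv_on_supp_unique in blast)

lemma inv_supp_carrier: "hermitian_mat n A \<Longrightarrow> inv_supp n A \<in> carrier_mat n n"
  using hermitian_inv_on_supp_inv_supp by (auto simp: inv_on_supp_def)

lemma mult_inv_supp_supp_op:
  "hermitian_mat n A \<Longrightarrow> w \<in> supp_op n A \<Longrightarrow> A *\<^sub>v (inv_supp n A *\<^sub>v w) = w"
  using hermitian_inv_on_supp_inv_supp by (auto simp: inv_on_supp_def)

lemma supp_op_subset_if_cols:
  assumes h: "hermitian_mat n A" and B: "(B :: complex mat) \<in> carrier_mat n n"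
    and cols: "\<And>l. l < n \<Longrightarrow> col B l \<in> supp_op n A"
  shows "supp_op n B \<subseteq> supp_op n A"
proof -
  have A: "A \<in> carrier_mat n n" by (rule hermitian_mat_carrier[OF h])
  define X where "X = inv_supp n A"
  have X: "X \<in> carrier_mat n n" unfolding X_def by (rule inv_supp_carrier[OF h])
  have "A * (X * B) = B"
  proof (rule mat_col_eqI)
    fix l assume "l < dim_col B"
    then have l: "l < n" using B by simp
    have "X * B \<in> carrier_mat n n" using X B by simp
    then have "col (A * (X * B)) l = A *\<^sub>v (X *\<^sub>v col B l)"
      using col_mult2[OF A _ l] col_mult2[OF X B l] by simp
    then show "col (A * (X * B)) l = col B l"
      using mult_inv_supp_supp_op[OF h cols[OF l]] by (simp add: X_def)
  qed (use A X B in auto)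
  then have B_eq: "B *\<^sub>v v = A *\<^sub>v ((X * B) *\<^sub>v v)" if "v \<in> carrier_vec n" for v
    using A X B that by (metis assoc_mult_mat_vec mult_carrier_mat)
  show ?thesis
  proof
    fix u assume "u \<in> supp_op n B"
    then obtain v where "v \<in> carrier_vec n" "u = B *\<^sub>v v" by (rule supp_opE)
    then show "u \<in> supp_op n A"
      using B_eq X B by (metis mult_carrier_mat mult_mat_vec_carrier supp_opI)
  qed
qed

lemma mult_mat_index_sum:
  "(A :: complex mat) \<in> carrier_mat n n \<Longrightarrow> B \<in> carrier_mat n n \<Longrightarrow> i < n \<Longrightarrow> j < n \<Longrightarrow>
   (A * B) $$ (i,j) = (\<Sum>k<n. A$$(i,k) * B$$(k,j))"
  by (auto simp: scalar_prod_def atLeast0LessThan intro!: sum.cong)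

lemma mtrace_hermitian_square_mult:
  assumes h: "hermitian_mat n D" and X: "X \<in> carrier_mat n n"
  shows "mtrace (D * D * X) = (\<Sum>l<n. (X *\<^sub>v col D l) \<bullet>c col D l)"
proof -
  have D: "D \<in> carrier_mat n n" by (rule hermitian_mat_carrier[OF h])
  have DD: "D * D \<in> carrier_mat n n" using D by simp
  have "dim_row (D * D * X) = n" using D by simp
  then have "mtrace (D * D * X) = (\<Sum>i<n. (D * D * X) $$ (i,i))"
    unfolding mtrace_def by simp
  also have "\<dots> = (\<Sum>i<n. \<Sum>j<n. \<Sum>l<n. D$$(i,l) * D$$(l,j) * X$$(j,i))"
    by (intro sum.cong refl) (simp add: mult_mat_index_sum[OF DD X] mult_mat_index_sum[OF D D]
        sum_distrib_right del: index_mult_mat)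
  also have "\<dots> = (\<Sum>j<n. \<Sum>i<n. \<Sum>l<n. X$$(j,i) * D$$(i,l) * D$$(l,j))"
    by (subst sum.swap) (simp add: mult_ac)
  also have "\<dots> = (\<Sum>l<n. \<Sum>j<n. \<Sum>i<n. X$$(j,i) * D$$(i,l) * D$$(l,j))"
    by (subst sum.swap, rule sum.cong[OF refl], subst sum.swap, rule refl)
  also have "\<dots> = (\<Sum>l<n. (X *\<^sub>v col D l) \<bullet>c col D l)"
    using D X by (auto simp: cscalar_prod_eq_sum[of _ n] mult_mat_vec_index_sum sum_distrib_right
        hermitian_mat_cnj[OF h] simp del: index_mult_mat_vec intro!: sum.cong)
  finally show ?thesis .
qed

section \<open>Resolvent estimates\<close>

lemma psd_mat_hermitian: "psd_mat n A \<Longrightarrow> hermitian_mat n A"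
  unfolding psd_mat_def by blast

lemma psd_mat_form:
  "psd_mat n A \<Longrightarrow> v \<in> carrier_vec n \<Longrightarrow> Im ((A *\<^sub>v v) \<bullet>c v) = 0 \<and> 0 \<le> Re ((A *\<^sub>v v) \<bullet>c v)"
  unfolding psd_mat_def by blast

text \<open>Below, \<open>w = (a A + b)\<^sup>-\<^sup>1 (a v)\<close>, so that \<open>\<langle>w, a v\<rangle>\<close> is the summand of the RLD Fisher information
  of the depolarized state with \<open>a = 1 - \<epsilon>\<close>, \<open>b = \<epsilon> / d\<close>.\<close>

context
  fixes n :: nat and A :: "complex mat" and a b :: real and v w :: "complex vec"
  assumes psd: "psd_mat n A" and pos: "0 < a" "0 < b"
    and carrier: "v \<in> carrier_vec n" "w \<in> carrier_vec n"
    and resolvent: "of_real a \<cdot>\<^sub>v (A *\<^sub>v w) + of_real b \<cdot>\<^sub>v w = of_real a \<cdot>\<^sub>v v"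
begin

private lemma A_carrier: "A \<in> carrier_mat n n"
  using hermitian_mat_carrier psd psd_mat_hermitian by blast

lemma resolvent_form_lower_bound: "b * Re (w \<bullet>c w) \<le> Re (w \<bullet>c (of_real a \<cdot>\<^sub>v v))"
proof -
  have Aw: "A *\<^sub>v w \<in> carrier_vec n" using A_carrier carrier by simp
  have "w \<bullet>c (of_real a \<cdot>\<^sub>v v) = of_real a * ((A *\<^sub>v w) \<bullet>c w) + of_real b * (w \<bullet>c w)"
    using carrier Aw hermitian_cscalar_prod[OF psd_mat_hermitian[OF psd], of w w]
    by (simp add: resolvent[symmetric] cscalar_prod_add_right[of _ n] cscalar_prod_smult_right[of _ n])
  then show ?thesis
    using psd_mat_form[OF psd carrier(2)] pos by simp
qed

private lemma A_w_eq: "of_real a \<cdot>\<^sub>v (A *\<^sub>v w) = of_real a \<cdot>\<^sub>v v - of_real b \<cdot>\<^sub>v w"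
  using add_vec_eq_imp_diff[of "of_real b \<cdot>\<^sub>v w" n "of_real a \<cdot>\<^sub>v (A *\<^sub>v w)" "of_real a \<cdot>\<^sub>v v"]
    resolvent A_carrier carrier by (simp add: comm_add_vec[of _ n])

text \<open>Positivity of \<open>A\<close> on \<open>w - u\<close>, where \<open>a A (w - u) = - b w\<close>.\<close>
lemma resolvent_form_self_le:
  assumes u: "u \<in> carrier_vec n" and v_eq: "v = A *\<^sub>v u"
  shows "Re (w \<bullet>c w) \<le> Re (w \<bullet>c u)"
proof -
  have "0 \<le> a * Re ((A *\<^sub>v (w - u)) \<bullet>c (w - u))"
    using psd_mat_form[OF psd, of "w - u"] carrier u pos by simp
  also have "a * Re ((A *\<^sub>v (w - u)) \<bullet>c (w - u)) = - b * (Re (w \<bullet>c w) - Re (w \<bullet>c u))"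
  proof -
    have "of_real a \<cdot>\<^sub>v (A *\<^sub>v (w - u)) = - (of_real b \<cdot>\<^sub>v w)"
    proof (rule eq_vecI)
      fix i assume "i < dim_vec (- (of_real b \<cdot>\<^sub>v w))"
      then have i: "i < n" using carrier by simp
      have "(of_real a \<cdot>\<^sub>v (A *\<^sub>v w)) $ i = (of_real a \<cdot>\<^sub>v (A *\<^sub>v u) - of_real b \<cdot>\<^sub>v w) $ i"
        using A_w_eq by (simp add: v_eq)
      then show "(of_real a \<cdot>\<^sub>v (A *\<^sub>v (w - u))) $ i = (- (of_real b \<cdot>\<^sub>v w)) $ i"
        using i A_carrier carrier u by (simp add: algebra_simps)
    qed (use A_carrier carrier in simp)
    then have "of_real a * ((A *\<^sub>v (w - u)) \<bullet>c (w - u)) = - of_real b * (w \<bullet>c (w - u))"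
      using A_carrier carrier u cscalar_prod_smult_left[of "A *\<^sub>v (w - u)" n "w - u" "of_real a"]
        cscalar_prod_smult_left[of w n "w - u" "- of_real b"]
      by simp
    from arg_cong[OF this, of Re] show ?thesis
      using carrier u by (simp add: cscalar_prod_diff_right[of _ n])
  qed
  finally show ?thesis
    using pos by (simp add: mult_le_0_iff)
qed

lemma resolvent_form_supp_approx:
  assumes u: "u \<in> carrier_vec n" and v_eq: "v = A *\<^sub>v u"
  shows "cmod (w \<bullet>c (of_real a \<cdot>\<^sub>v v) - of_real a * (u \<bullet>c v)) \<le> b * (\<Sum>i<n. cmod (u$i))\<^sup>2"
proof -
  have h: "hermitian_mat n A" by (rule psd_mat_hermitian[OF psd])
  have Aw: "A *\<^sub>v w \<in> carrier_vec n" using A_carrier carrier by simp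
  have vu: "v \<bullet>c u = u \<bullet>c v"
    using psd_mat_form[OF psd u] cscalar_prod_swap[OF u carrier(1)] v_eq by (simp add: complex_eq_iff)
  have "w \<bullet>c (of_real a \<cdot>\<^sub>v v) = (of_real a \<cdot>\<^sub>v (A *\<^sub>v w)) \<bullet>c u"
    using carrier Aw u hermitian_cscalar_prod[OF h carrier(2) u]
    by (simp add: v_eq cscalar_prod_smult_left[of _ n] cscalar_prod_smult_right[of _ n])
  also have "\<dots> = of_real a * (u \<bullet>c v) - of_real b * (w \<bullet>c u)"
    using carrier u vu by (simp add: A_w_eq cscalar_prod_diff_left[of _ n] cscalar_prod_smult_left[of _ n])
  finally have diff: "w \<bullet>c (of_real a \<cdot>\<^sub>v v) - of_real a * (u \<bullet>c v) = - of_real b * (w \<bullet>c u)"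
    by simp
  have norm_le: "Re (w \<bullet>c w) \<le> Re (w \<bullet>c u)" by (rule resolvent_form_self_le[OF u v_eq])
  define S where "S = (\<Sum>i<n. cmod (u$i))"
  have S: "0 \<le> S" by (simp add: S_def sum_nonneg)
  have cs: "cmod (w \<bullet>c u) \<le> sqrt (Re (w \<bullet>c w)) * S"
    unfolding S_def by (rule cmod_cscalar_prod_le[OF carrier(2) u])
  have sq: "sqrt (Re (w \<bullet>c w)) * sqrt (Re (w \<bullet>c w)) \<le> sqrt (Re (w \<bullet>c w)) * S"
    using norm_le cs complex_Re_le_cmod[of "w \<bullet>c u"] cscalar_prod_self_nonneg[OF carrier(2)] by simp
  have "0 \<le> sqrt (Re (w \<bullet>c w))" using cscalar_prod_self_nonneg[OF carrier(2)] by simp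
  then have "sqrt (Re (w \<bullet>c w)) \<le> S"
    using S by (cases "sqrt (Re (w \<bullet>c w)) = 0") (auto intro: mult_left_le_imp_le[OF sq])
  then have "cmod (w \<bullet>c u) \<le> S\<^sup>2"
    using cs S by (metis mult_right_mono order_trans power2_eq_square)
  then show ?thesis
    using pos by (simp add: diff norm_mult S_def)
qed

lemma resolvent_form_kernel_lower_bound:
  assumes y: "y \<in> carrier_vec n" and k: "k \<in> carrier_vec n" "k \<noteq> 0\<^sub>v n"
    and v_eq: "v = A *\<^sub>v y + k" and Ak: "A *\<^sub>v k = 0\<^sub>v n"
  shows "a\<^sup>2 * (Re (k \<bullet>c k))\<^sup>2 / (b * (\<Sum>i<n. cmod (k$i))\<^sup>2) \<le> Re (w \<bullet>c (of_real a \<cdot>\<^sub>v v))"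
proof -
  have h: "hermitian_mat n A" by (rule psd_mat_hermitian[OF psd])
  have Aw: "A *\<^sub>v w \<in> carrier_vec n" and Ay: "A *\<^sub>v y \<in> carrier_vec n"
    using A_carrier carrier y by simp_all
  define K2 where "K2 = Re (k \<bullet>c k)"
  define T where "T = (\<Sum>i<n. cmod (k$i))"
  define N where "N = Re (w \<bullet>c w)"
  have K2: "0 < K2"
    using cscalar_prod_self_nonneg[OF k(1)] cscalar_prod_self_eq_0_iff[OF k(1)] k(2)
    by (simp add: K2_def order_less_le)
  have "of_real b * (w \<bullet>c k) = (of_real a \<cdot>\<^sub>v v) \<bullet>c k"
    using carrier k Aw hermitian_cscalar_prod[OF h carrier(2) k(1)] Ak
    by (simp add: resolvent[symmetric] cscalar_prod_add_left[of _ n] cscalar_prod_smult_left[of _ n])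
  also have "\<dots> = of_real (a * K2)"
    using carrier k y Ay hermitian_cscalar_prod[OF h y k(1)] Ak cscalar_prod_self_Im[OF k(1)]
    by (simp add: v_eq cscalar_prod_add_left[of _ n] cscalar_prod_smult_left[of _ n] K2_def complex_eq_iff)
  finally have "b * cmod (w \<bullet>c k) = a * K2"
    using pos K2 by (metis abs_of_pos mult_pos_pos norm_mult norm_of_real)
  then have aK2: "a * K2 \<le> b * (sqrt N * T)"
    using mult_left_mono[OF cmod_cscalar_prod_le[OF carrier(2) k(1)], of b] pos by (simp add: N_def T_def)
  have N: "0 \<le> N" by (simp add: N_def cscalar_prod_self_nonneg[OF carrier(2)])
  have "0 < a * K2" using pos K2 by simp
  then have "T \<noteq> 0" using aK2 by auto
  then have bT: "0 < b * T" using pos by (simp add: T_def sum_nonneg order_less_le)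
  have "a * K2 / (b * T) \<le> sqrt N"
    using aK2 bT by (simp add: divide_le_eq mult_ac)
  then have "(a * K2 / (b * T))\<^sup>2 \<le> N"
    using power_mono[of "a * K2 / (b * T)" "sqrt N" 2] pos K2 bT N by simp
  then have "b * (a * K2 / (b * T))\<^sup>2 \<le> b * N"
    using pos by (simp add: mult_left_mono)
  then have "b * (a * K2 / (b * T))\<^sup>2 \<le> Re (w \<bullet>c (of_real a \<cdot>\<^sub>v v))"
    using resolvent_form_lower_bound by (simp add: N_def)
  moreover have "b * (a * K2 / (b * T))\<^sup>2 = a\<^sup>2 * K2\<^sup>2 / (b * T\<^sup>2)"
    using pos bT by (simp add: power2_eq_square field_simps)
  ultimately show ?thesis by (simp add: K2_def T_def)
qed

end

section \<open>Depolarization\<close>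

lemma smult_mat_mult_mat_vec:
  "dim_vec v = dim_col A \<Longrightarrow> (k \<cdot>\<^sub>m A) *\<^sub>v v = k \<cdot>\<^sub>v (A *\<^sub>v (v :: complex vec))"
  by (intro eq_vecI) (auto simp: scalar_prod_def sum_distrib_left mult.assoc intro!: sum.cong)

definition depolarized :: "nat \<Rightarrow> real \<Rightarrow> complex mat \<Rightarrow> complex mat" where
  "depolarized n \<epsilon> A = of_real (1 - \<epsilon>) \<cdot>\<^sub>m A + of_real (\<epsilon> / real n) \<cdot>\<^sub>m 1\<^sub>m n"

lemma depolarize_eq_depolarized: "depolarize n \<epsilon> \<rho> t = depolarized n \<epsilon> (\<rho> t)"
  unfolding depolarize_def depolarized_def ..

lemma depolarized_carrier: "A \<in> carrier_mat n n \<Longrightarrow> depolarized n \<epsilon> A \<in> carrier_mat n n"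
  by (simp add: depolarized_def)

lemma depolarized_mult_mat_vec:
  assumes "A \<in> carrier_mat n n" "w \<in> carrier_vec n"
  shows "depolarized n \<epsilon> A *\<^sub>v w = of_real (1 - \<epsilon>) \<cdot>\<^sub>v (A *\<^sub>v w) + of_real (\<epsilon> / real n) \<cdot>\<^sub>v w"
  using assms by (simp add: depolarized_def add_mult_distrib_mat_vec[of _ n n] smult_mat_mult_mat_vec)

lemma hermitian_depolarized:
  assumes "hermitian_mat n A"
  shows "hermitian_mat n (depolarized n \<epsilon> A)"
  using hermitian_mat_carrier[OF assms] hermitian_mat_cnj[OF assms]
  by (simp add: hermitian_mat_def depolarized_def)

lemma depolarized_supp_op:
  assumes psd: "psd_mat n A" and "0 < n" "0 < \<epsilon>" "\<epsilon> \<le> 1" and w: "w \<in> carrier_vec n"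
  shows "w \<in> supp_op n (depolarized n \<epsilon> A)"
proof -
  let ?M = "depolarized n \<epsilon> A"
  have A: "A \<in> carrier_mat n n" by (rule hermitian_mat_carrier[OF psd_mat_hermitian[OF psd]])
  obtain y k where y: "y \<in> carrier_vec n" and k: "k \<in> carrier_vec n"
    and w_eq: "w = ?M *\<^sub>v y + k" and Mk: "?M *\<^sub>v k = 0\<^sub>v n"
    using hermitian_range_kernel_decomp[OF hermitian_depolarized[OF psd_mat_hermitian[OF psd]] w] .
  \<comment> \<open>\<open>0 = \<langle>M k, k\<rangle> \<ge> (\<epsilon>/n) |k|\<^sup>2\<close>\<close>
  have "(1 - \<epsilon>) * Re ((A *\<^sub>v k) \<bullet>c k) + \<epsilon> / real n * Re (k \<bullet>c k) = Re ((?M *\<^sub>v k) \<bullet>c k)"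
    using A k by (simp add: depolarized_mult_mat_vec cscalar_prod_add_left[of _ n] cscalar_prod_smult_left[of _ n])
  also have "\<dots> = 0" using Mk k by simp
  moreover have "0 \<le> (1 - \<epsilon>) * Re ((A *\<^sub>v k) \<bullet>c k)" "0 \<le> \<epsilon> / real n * Re (k \<bullet>c k)"
    using psd_mat_form[OF psd k] cscalar_prod_self_nonneg[OF k] assms(2-4) by simp_all
  ultimately have "\<epsilon> / real n * Re (k \<bullet>c k) = 0" by linarith
  then have "Re (k \<bullet>c k) = 0" using assms(2,3) by simp
  then have "k = 0\<^sub>v n" using cscalar_prod_self_eq_0_iff[OF k] by simp
  moreover have "?M *\<^sub>v y \<in> carrier_vec n" using depolarized_carrier[OF A, of \<epsilon>] y by simp
  ultimately have "w = ?M *\<^sub>v y" using w_eq by simp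
  then show ?thesis using y by (simp add: supp_opI)
qed

definition inv_supp_qform :: "nat \<Rightarrow> complex mat \<Rightarrow> complex vec \<Rightarrow> complex" where
  "inv_supp_qform n A v = (inv_supp n A *\<^sub>v v) \<bullet>c v"

lemma depolarized_qform_resolvent:
  assumes psd: "psd_mat n A" and "0 < n" "0 < \<epsilon>" "\<epsilon> \<le> 1" and v: "v \<in> carrier_vec n"
  obtains w where "w \<in> carrier_vec n"
    "of_real (1 - \<epsilon>) \<cdot>\<^sub>v (A *\<^sub>v w) + of_real (\<epsilon> / real n) \<cdot>\<^sub>v w = of_real (1 - \<epsilon>) \<cdot>\<^sub>v v"
    "inv_supp_qform n (depolarized n \<epsilon> A) (of_real (1 - \<epsilon>) \<cdot>\<^sub>v v) = w \<bullet>c (of_real (1 - \<epsilon>) \<cdot>\<^sub>v v)"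
proof
  let ?M = "depolarized n \<epsilon> A" and ?v = "of_real (1 - \<epsilon>) \<cdot>\<^sub>v v"
  have hM: "hermitian_mat n ?M" by (rule hermitian_depolarized[OF psd_mat_hermitian[OF psd]])
  have A: "A \<in> carrier_mat n n" by (rule hermitian_mat_carrier[OF psd_mat_hermitian[OF psd]])
  show w: "inv_supp n ?M *\<^sub>v ?v \<in> carrier_vec n" using inv_supp_carrier[OF hM] v by simp
  have "?M *\<^sub>v (inv_supp n ?M *\<^sub>v ?v) = ?v"
    using mult_inv_supp_supp_op[OF hM] depolarized_supp_op[OF assms(1-4)] v by simp
  then show "of_real (1 - \<epsilon>) \<cdot>\<^sub>v (A *\<^sub>v (inv_supp n ?M *\<^sub>v ?v))
      + of_real (\<epsilon> / real n) \<cdot>\<^sub>v (inv_supp n ?M *\<^sub>v ?v) = ?v"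
    using depolarized_mult_mat_vec[OF A w] by simp
qed (simp add: inv_supp_qform_def)

lemma depolarized_qform_nonneg:
  assumes psd: "psd_mat n A" and n: "0 < n" and \<epsilon>: "0 < \<epsilon>" "\<epsilon> < 1" and v: "v \<in> carrier_vec n"
  shows "0 \<le> Re (inv_supp_qform n (depolarized n \<epsilon> A) (of_real (1 - \<epsilon>) \<cdot>\<^sub>v v))"
proof -
  obtain w where w: "w \<in> carrier_vec n"
    and eq: "of_real (1 - \<epsilon>) \<cdot>\<^sub>v (A *\<^sub>v w) + of_real (\<epsilon> / real n) \<cdot>\<^sub>v w = of_real (1 - \<epsilon>) \<cdot>\<^sub>v v"
    and qform: "inv_supp_qform n (depolarized n \<epsilon> A) (of_real (1 - \<epsilon>) \<cdot>\<^sub>v v) = w \<bullet>c (of_real (1 - \<epsilon>) \<cdot>\<^sub>v v)"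
    using depolarized_qform_resolvent[OF psd n \<epsilon>(1) _ v] \<epsilon>(2) by auto
  have "\<epsilon> / real n * Re (w \<bullet>c w) \<le> Re (w \<bullet>c (of_real (1 - \<epsilon>) \<cdot>\<^sub>v v))"
    using resolvent_form_lower_bound[OF psd _ _ v w eq] \<epsilon> n by simp
  moreover have "0 \<le> \<epsilon> / real n * Re (w \<bullet>c w)"
    using cscalar_prod_self_nonneg[OF w] \<epsilon> by simp
  ultimately show ?thesis unfolding qform by linarith
qed

lemma tendsto_depolarized_qform_supp_op:
  assumes psd: "psd_mat n A" and n: "0 < n" and v: "v \<in> supp_op n A"
  shows "((\<lambda>\<epsilon>. inv_supp_qform n (depolarized n \<epsilon> A) (of_real (1 - \<epsilon>) \<cdot>\<^sub>v v))
           \<longlongrightarrow> inv_supp_qform n A v) (at_right 0)"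
proof -
  have h: "hermitian_mat n A" by (rule psd_mat_hermitian[OF psd])
  have v_carrier: "v \<in> carrier_vec n" by (rule supp_op_carrier[OF hermitian_mat_carrier[OF h] v])
  define u where "u = inv_supp n A *\<^sub>v v"
  have u: "u \<in> carrier_vec n" "v = A *\<^sub>v u"
    using inv_supp_carrier[OF h] v_carrier mult_inv_supp_supp_op[OF h v] by (simp_all add: u_def)
  define S where "S = (\<Sum>i<n. cmod (u$i))"
  let ?q = "\<lambda>\<epsilon>. inv_supp_qform n (depolarized n \<epsilon> A) (of_real (1 - \<epsilon>) \<cdot>\<^sub>v v)"
  have "eventually (\<lambda>\<epsilon>. norm (?q \<epsilon> - of_real (1 - \<epsilon>) * (u \<bullet>c v)) \<le> \<epsilon> / real n * S\<^sup>2) (at_right 0)"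
  proof (rule eventually_at_rightI[of 0 1])
    fix \<epsilon> :: real assume "\<epsilon> \<in> {0<..<1}"
    then have \<epsilon>: "0 < \<epsilon>" "\<epsilon> < 1" by auto
    obtain w where w: "w \<in> carrier_vec n"
      and eq: "of_real (1 - \<epsilon>) \<cdot>\<^sub>v (A *\<^sub>v w) + of_real (\<epsilon> / real n) \<cdot>\<^sub>v w = of_real (1 - \<epsilon>) \<cdot>\<^sub>v v"
      and qform: "?q \<epsilon> = w \<bullet>c (of_real (1 - \<epsilon>) \<cdot>\<^sub>v v)"
      using depolarized_qform_resolvent[OF psd n \<epsilon>(1) _ v_carrier] \<epsilon>(2) by auto
    show "norm (?q \<epsilon> - of_real (1 - \<epsilon>) * (u \<bullet>c v)) \<le> \<epsilon> / real n * S\<^sup>2"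
      unfolding qform S_def using resolvent_form_supp_approx[OF psd _ _ v_carrier w eq u] \<epsilon> n by simp
  qed simp
  moreover have "((\<lambda>\<epsilon>. \<epsilon> / real n * S\<^sup>2) \<longlongrightarrow> 0) (at_right 0)"
    using n by (auto intro!: tendsto_eq_intros)
  ultimately have "((\<lambda>\<epsilon>. ?q \<epsilon> - of_real (1 - \<epsilon>) * (u \<bullet>c v)) \<longlongrightarrow> 0) (at_right 0)"
    by (rule Lim_null_comparison)
  moreover have "((\<lambda>\<epsilon>. of_real (1 - \<epsilon>) * (u \<bullet>c v)) \<longlongrightarrow> u \<bullet>c v) (at_right (0 :: real))"
    by (auto intro!: tendsto_eq_intros)
  ultimately have "((\<lambda>\<epsilon>. (?q \<epsilon> - of_real (1 - \<epsilon>) * (u \<bullet>c v)) + of_real (1 - \<epsilon>) * (u \<bullet>c v))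
      \<longlongrightarrow> 0 + u \<bullet>c v) (at_right 0)"
    by (rule tendsto_add)
  then show ?thesis by (simp add: inv_supp_qform_def u_def)
qed

lemma filterlim_depolarized_qform_not_supp_op:
  assumes psd: "psd_mat n A" and n: "0 < n" and v: "v \<in> carrier_vec n" "v \<notin> supp_op n A"
  shows "filterlim (\<lambda>\<epsilon>. Re (inv_supp_qform n (depolarized n \<epsilon> A) (of_real (1 - \<epsilon>) \<cdot>\<^sub>v v))) at_top (at_right 0)"
proof -
  have h: "hermitian_mat n A" by (rule psd_mat_hermitian[OF psd])
  obtain y k where y: "y \<in> carrier_vec n" and k: "k \<in> carrier_vec n"
    and v_eq: "v = A *\<^sub>v y + k" and Ak: "A *\<^sub>v k = 0\<^sub>v n"
    using hermitian_range_kernel_decomp[OF h v(1)] .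
  have "k \<noteq> 0\<^sub>v n"
    using v y v_eq hermitian_mat_carrier[OF h] supp_opI[OF y, of "A"] by auto
  then obtain i where i: "i < n" "k$i \<noteq> 0" using k by (auto simp: vec_eq_iff)
  define K2 where "K2 = Re (k \<bullet>c k)"
  define T where "T = (\<Sum>i<n. cmod (k$i))"
  define C where "C = real n * K2\<^sup>2 / T\<^sup>2"
  have "0 < K2"
    using cscalar_prod_self_nonneg[OF k] cscalar_prod_self_eq_0_iff[OF k] \<open>k \<noteq> 0\<^sub>v n\<close>
    by (simp add: K2_def order_less_le)
  moreover have "0 < T" unfolding T_def using i by (intro sum_pos2[of _ i]) auto
  ultimately have C: "0 < C" using n by (simp add: C_def)
  let ?q = "\<lambda>\<epsilon>. Re (inv_supp_qform n (depolarized n \<epsilon> A) (of_real (1 - \<epsilon>) \<cdot>\<^sub>v v))"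
  have "filterlim (\<lambda>\<epsilon>::real. (1 - \<epsilon>)\<^sup>2 / \<epsilon>) at_top (at_right 0)" by real_asymp
  then have "filterlim (\<lambda>\<epsilon>. C * ((1 - \<epsilon>)\<^sup>2 / \<epsilon>)) at_top (at_right 0)"
    by (rule filterlim_tendsto_pos_mult_at_top[OF tendsto_const C])
  moreover have "eventually (\<lambda>\<epsilon>. C * ((1 - \<epsilon>)\<^sup>2 / \<epsilon>) \<le> ?q \<epsilon>) (at_right 0)"
  proof (rule eventually_at_rightI[of 0 1])
    fix \<epsilon> :: real assume "\<epsilon> \<in> {0<..<1}"
    then have \<epsilon>: "0 < \<epsilon>" "\<epsilon> < 1" by auto
    obtain w where w: "w \<in> carrier_vec n"
      and eq: "of_real (1 - \<epsilon>) \<cdot>\<^sub>v (A *\<^sub>v w) + of_real (\<epsilon> / real n) \<cdot>\<^sub>v w = of_real (1 - \<epsilon>) \<cdot>\<^sub>v v"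
      and qform: "inv_supp_qform n (depolarized n \<epsilon> A) (of_real (1 - \<epsilon>) \<cdot>\<^sub>v v) = w \<bullet>c (of_real (1 - \<epsilon>) \<cdot>\<^sub>v v)"
      using depolarized_qform_resolvent[OF psd n \<epsilon>(1) _ v(1)] \<epsilon>(2) by auto
    have "(1 - \<epsilon>)\<^sup>2 * K2\<^sup>2 / (\<epsilon> / real n * T\<^sup>2) \<le> ?q \<epsilon>"
      unfolding qform K2_def T_def
      using resolvent_form_kernel_lower_bound[OF psd _ _ v(1) w eq y k \<open>k \<noteq> 0\<^sub>v n\<close> v_eq Ak] \<epsilon> n
      by simp
    also have "(1 - \<epsilon>)\<^sup>2 * K2\<^sup>2 / (\<epsilon> / real n * T\<^sup>2) = C * ((1 - \<epsilon>)\<^sup>2 / \<epsilon>)"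
      using \<epsilon> n \<open>0 < T\<close> by (simp add: C_def field_simps)
    finally show "C * ((1 - \<epsilon>)\<^sup>2 / \<epsilon>) \<le> ?q \<epsilon>" .
  qed simp
  ultimately show ?thesis by (rule filterlim_at_top_mono)
qed

lemma tendsto_depolarized_qform_sum:
  assumes psd: "psd_mat n A" and n: "0 < n" and D: "D \<in> carrier_mat n n"
  shows "((\<lambda>\<epsilon>. ereal (Re (\<Sum>l<n. inv_supp_qform n (depolarized n \<epsilon> A) (of_real (1 - \<epsilon>) \<cdot>\<^sub>v col D l))))
    \<longlongrightarrow> (if supp_op n D \<subseteq> supp_op n A then ereal (Re (\<Sum>l<n. inv_supp_qform n A (col D l))) else \<infinity>))
    (at_right 0)"
proof (cases "supp_op n D \<subseteq> supp_op n A")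
  case True
  then have "col D l \<in> supp_op n A" if "l < n" for l
    using col_in_supp_op[OF D that] by blast
  then have "((\<lambda>\<epsilon>. \<Sum>l<n. inv_supp_qform n (depolarized n \<epsilon> A) (of_real (1 - \<epsilon>) \<cdot>\<^sub>v col D l))
      \<longlongrightarrow> (\<Sum>l<n. inv_supp_qform n A (col D l))) (at_right 0)"
    by (intro tendsto_sum tendsto_depolarized_qform_supp_op[OF psd n]) simp
  from tendsto_Re[OF this] show ?thesis using True by simp
next
  case False
  then obtain l where l: "l < n" "col D l \<notin> supp_op n A"
    using supp_op_subset_if_cols[OF psd_mat_hermitian[OF psd] D] by blast
  have col: "col D j \<in> carrier_vec n" for j using D by (simp add: carrier_vecI)
  let ?q = "\<lambda>\<epsilon> j. Re (inv_supp_qform n (depolarized n \<epsilon> A) (of_real (1 - \<epsilon>) \<cdot>\<^sub>v col D j))"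
  have "eventually (\<lambda>\<epsilon>. ?q \<epsilon> l \<le> (\<Sum>j<n. ?q \<epsilon> j)) (at_right 0)"
    using l depolarized_qform_nonneg[OF psd n _ _ col]
    by (intro eventually_at_rightI[of 0 1] member_le_sum) auto
  with filterlim_depolarized_qform_not_supp_op[OF psd n col l(2)]
  have "filterlim (\<lambda>\<epsilon>. \<Sum>j<n. ?q \<epsilon> j) at_top (at_right 0)"
    by (rule filterlim_at_top_mono)
  then show ?thesis using False by (simp add: tendsto_PInfty_eq_at_top)
qed

lemma mat_deriv_carrier: "mat_deriv d \<rho> \<theta> \<in> carrier_mat d d"
  by (simp add: mat_deriv_def)

lemma mat_deriv_has_vector_derivative:
  assumes "mat_differentiable d \<rho> \<theta>" "i < d" "j < d"
  shows "((\<lambda>t. \<rho> t $$ (i,j)) has_vector_derivative mat_deriv d \<rho> \<theta> $$ (i,j)) (at \<theta>)"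
  using assms by (simp add: mat_differentiable_def mat_deriv_def vector_derivative_works[symmetric])

lemma hermitian_mat_deriv:
  assumes \<Theta>: "open \<Theta>" "\<theta> \<in> \<Theta>" and herm: "\<forall>t \<in> \<Theta>. hermitian_mat d (\<rho> t)"
    and diff: "mat_differentiable d \<rho> \<theta>"
  shows "hermitian_mat d (mat_deriv d \<rho> \<theta>)"
  unfolding hermitian_mat_def
proof (intro conjI allI impI)
  show "mat_deriv d \<rho> \<theta> \<in> carrier_mat d d" by (rule mat_deriv_carrier)
  fix i j assume ij: "i < d" "j < d"
  have "((\<lambda>t. cnj (\<rho> t $$ (j,i))) has_vector_derivative cnj (mat_deriv d \<rho> \<theta> $$ (j,i))) (at \<theta>)"
    by (rule has_vector_derivative_cnj[OF mat_deriv_has_vector_derivative[OF diff ij(2,1)]])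
  moreover have "cnj (\<rho> t $$ (j,i)) = \<rho> t $$ (i,j)" if "t \<in> \<Theta>" for t
    using hermitian_mat_cnj[of d "\<rho> t" j i] herm that ij by simp
  ultimately have "((\<lambda>t. \<rho> t $$ (i,j)) has_vector_derivative cnj (mat_deriv d \<rho> \<theta> $$ (j,i))) (at \<theta>)"
    by (rule has_vector_derivative_transform_within_open[OF _ \<Theta>])
  then have "vector_derivative (\<lambda>t. \<rho> t $$ (i,j)) (at \<theta>) = cnj (mat_deriv d \<rho> \<theta> $$ (j,i))"
    by (rule vector_derivative_at)
  then show "mat_deriv d \<rho> \<theta> $$ (i,j) = cnj (mat_deriv d \<rho> \<theta> $$ (j,i))"
    using ij by (simp add: mat_deriv_def)
qed

lemma mat_deriv_depolarize:
  assumes \<Theta>: "open \<Theta>" "\<theta> \<in> \<Theta>" and carrier: "\<forall>t \<in> \<Theta>. \<rho> t \<in> carrier_mat d d"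
    and diff: "mat_differentiable d \<rho> \<theta>"
  shows "mat_deriv d (depolarize d \<epsilon> \<rho>) \<theta> = of_real (1 - \<epsilon>) \<cdot>\<^sub>m mat_deriv d \<rho> \<theta>"
proof (rule eq_matI)
  fix i j assume "i < dim_row (of_real (1 - \<epsilon>) \<cdot>\<^sub>m mat_deriv d \<rho> \<theta>)"
    "j < dim_col (of_real (1 - \<epsilon>) \<cdot>\<^sub>m mat_deriv d \<rho> \<theta>)"
  then have ij: "i < d" "j < d" by (simp_all add: mat_deriv_def)
  let ?c = "of_real (\<epsilon> / real d) * (1\<^sub>m d :: complex mat) $$ (i,j)"
  have "((\<lambda>t. of_real (1 - \<epsilon>) * \<rho> t $$ (i,j) + ?c)
      has_vector_derivative of_real (1 - \<epsilon>) * mat_deriv d \<rho> \<theta> $$ (i,j)) (at \<theta>)"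
    unfolding has_vector_derivative_add_const
    by (rule has_vector_derivative_mult_right[OF mat_deriv_has_vector_derivative[OF diff ij]])
  moreover have "of_real (1 - \<epsilon>) * \<rho> t $$ (i,j) + ?c = depolarize d \<epsilon> \<rho> t $$ (i,j)" if "t \<in> \<Theta>" for t
    using carrier[rule_format, OF that] ij by (simp add: depolarize_def)
  ultimately have "((\<lambda>t. depolarize d \<epsilon> \<rho> t $$ (i,j))
      has_vector_derivative of_real (1 - \<epsilon>) * mat_deriv d \<rho> \<theta> $$ (i,j)) (at \<theta>)"
    by (rule has_vector_derivative_transform_within_open[OF _ \<Theta>])
  then show "mat_deriv d (depolarize d \<epsilon> \<rho>) \<theta> $$ (i,j) = (of_real (1 - \<epsilon>) \<cdot>\<^sub>m mat_deriv d \<rho> \<theta>) $$ (i,j)"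
    using ij by (simp add: mat_deriv_def vector_derivative_at)
qed (simp_all add: mat_deriv_def)

lemma hermitian_smult_of_real:
  assumes "hermitian_mat n A"
  shows "hermitian_mat n (of_real r \<cdot>\<^sub>m A)"
  using hermitian_mat_carrier[OF assms] hermitian_mat_cnj[OF assms] by (simp add: hermitian_mat_def)

lemma RLD_fisher_eq_qform_sum:
  assumes "hermitian_mat d (\<rho> \<theta>)" "hermitian_mat d (mat_deriv d \<rho> \<theta>)"
  shows "RLD_fisher d \<rho> \<theta> = (if supp_op d (mat_deriv d \<rho> \<theta>) \<subseteq> supp_op d (\<rho> \<theta>)
    then ereal (Re (\<Sum>l<d. inv_supp_qform d (\<rho> \<theta>) (col (mat_deriv d \<rho> \<theta>) l))) else \<infinity>)"
  using mtrace_hermitian_square_mult[OF assms(2) inv_supp_carrier[OF assms(1)]]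
  by (simp add: RLD_fisher_def Let_def inv_supp_qform_def)

lemma density_op_dim_pos:
  assumes "density_op d A"
  shows "0 < d"
proof (rule ccontr)
  assume "\<not> 0 < d"
  moreover have "A \<in> carrier_mat d d" "mtrace A = 1"
    using assms hermitian_mat_carrier by (auto simp: density_op_def psd_mat_def)
  ultimately show False by (simp add: mtrace_def)
qed

lemma RLD_fisher_depolarize:
  assumes \<Theta>: "open \<Theta>" "\<theta> \<in> \<Theta>" and dens: "\<forall>t \<in> \<Theta>. density_op d (\<rho> t)"
    and diff: "mat_differentiable d \<rho> \<theta>" and \<epsilon>: "0 < \<epsilon>" "\<epsilon> < 1"
  shows "RLD_fisher d (depolarize d \<epsilon> \<rho>) \<theta> = ereal (Re (\<Sum>l<d.
    inv_supp_qform d (depolarized d \<epsilon> (\<rho> \<theta>)) (of_real (1 - \<epsilon>) \<cdot>\<^sub>v col (mat_deriv d \<rho> \<theta>) l)))"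
proof -
  have psd: "psd_mat d (\<rho> \<theta>)" and d: "0 < d"
    using dens \<Theta> density_op_dim_pos by (auto simp: density_op_def)
  have herm: "\<forall>t \<in> \<Theta>. hermitian_mat d (\<rho> t)"
    using dens by (simp add: density_op_def psd_mat_def)
  have D_\<epsilon>: "mat_deriv d (depolarize d \<epsilon> \<rho>) \<theta> = of_real (1 - \<epsilon>) \<cdot>\<^sub>m mat_deriv d \<rho> \<theta>"
    using mat_deriv_depolarize[OF \<Theta> _ diff] herm hermitian_mat_carrier by blast
  have M: "depolarize d \<epsilon> \<rho> \<theta> = depolarized d \<epsilon> (\<rho> \<theta>)"
    by (rule depolarize_eq_depolarized)
  have D_\<epsilon>_carrier: "of_real (1 - \<epsilon>) \<cdot>\<^sub>m mat_deriv d \<rho> \<theta> \<in> carrier_mat d d"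
    using mat_deriv_carrier[of d \<rho> \<theta>] by simp
  have supp: "supp_op d (of_real (1 - \<epsilon>) \<cdot>\<^sub>m mat_deriv d \<rho> \<theta>) \<subseteq> supp_op d (depolarized d \<epsilon> (\<rho> \<theta>))"
  proof
    fix u assume "u \<in> supp_op d (of_real (1 - \<epsilon>) \<cdot>\<^sub>m mat_deriv d \<rho> \<theta>)"
    then have "u \<in> carrier_vec d" by (rule supp_op_carrier[OF D_\<epsilon>_carrier])
    then show "u \<in> supp_op d (depolarized d \<epsilon> (\<rho> \<theta>))"
      using depolarized_supp_op[OF psd d \<epsilon>(1)] \<epsilon>(2) by simp
  qed
  have "RLD_fisher d (depolarize d \<epsilon> \<rho>) \<theta> = ereal (Re (\<Sum>l<d.
      inv_supp_qform d (depolarized d \<epsilon> (\<rho> \<theta>)) (col (of_real (1 - \<epsilon>) \<cdot>\<^sub>m mat_deriv d \<rho> \<theta>) l)))"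
    using RLD_fisher_eq_qform_sum[of d "depolarize d \<epsilon> \<rho>" \<theta>, unfolded M D_\<epsilon>,
        OF hermitian_depolarized[OF psd_mat_hermitian[OF psd]]
        hermitian_smult_of_real[OF hermitian_mat_deriv[OF \<Theta> herm diff]]]
    unfolding if_P[OF supp] .
  also have "\<dots> = ereal (Re (\<Sum>l<d.
      inv_supp_qform d (depolarized d \<epsilon> (\<rho> \<theta>)) (of_real (1 - \<epsilon>) \<cdot>\<^sub>v col (mat_deriv d \<rho> \<theta>) l)))"
    using mat_deriv_carrier[of d \<rho> \<theta>] by (intro arg_cong[where f="\<lambda>x. ereal (Re x)"] sum.cong) simp_all
  finally show ?thesis .
qed

theorem mainTheorem2:
  fixes d :: nat and \<Theta> :: "real set" and \<rho> :: "real \<Rightarrow> complex mat" and \<theta> :: real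
  assumes "open \<Theta>"
    and "\<forall>t \<in> \<Theta>. density_op d (\<rho> t)"
    and "\<forall>t \<in> \<Theta>. mat_differentiable d \<rho> t"
    and "\<theta> \<in> \<Theta>"
  shows "((\<lambda>\<epsilon>. RLD_fisher d (depolarize d \<epsilon> \<rho>) \<theta>) \<longlongrightarrow> RLD_fisher d \<rho> \<theta>) (at_right 0)"
proof -
  have diff: "mat_differentiable d \<rho> \<theta>" using assms(3,4) by blast
  have psd: "psd_mat d (\<rho> \<theta>)" and d: "0 < d"
    using assms(2,4) density_op_dim_pos by (auto simp: density_op_def)
  have herm: "\<forall>t \<in> \<Theta>. hermitian_mat d (\<rho> t)"
    using assms(2) by (simp add: density_op_def psd_mat_def)
  define D where "D = mat_deriv d \<rho> \<theta>"
  have D: "D \<in> carrier_mat d d" unfolding D_def by (rule mat_deriv_carrier)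
  have RLD: "RLD_fisher d \<rho> \<theta> = (if supp_op d D \<subseteq> supp_op d (\<rho> \<theta>)
      then ereal (Re (\<Sum>l<d. inv_supp_qform d (\<rho> \<theta>) (col D l))) else \<infinity>)"
    unfolding D_def
    by (rule RLD_fisher_eq_qform_sum[OF psd_mat_hermitian[OF psd] hermitian_mat_deriv[OF assms(1,4) herm diff]])
  have "eventually (\<lambda>\<epsilon>. ereal (Re (\<Sum>l<d. inv_supp_qform d (depolarized d \<epsilon> (\<rho> \<theta>))
      (of_real (1 - \<epsilon>) \<cdot>\<^sub>v col D l))) = RLD_fisher d (depolarize d \<epsilon> \<rho>) \<theta>) (at_right 0)"
    using RLD_fisher_depolarize[OF assms(1,4,2) diff] by (intro eventually_at_rightI[of 0 1]) (auto simp: D_def)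
  from Lim_transform_eventually[OF tendsto_depolarized_qform_sum[OF psd d D] this]
  show ?thesis unfolding RLD .
qed

end
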